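(* Let $G$ be a multiplicatively written Abelian group with identity $e$, let $\phi$ be a height on $G$, fix $\alpha\in G$, and let $t\in(0,\infty]$. The following three conditions are equivalent: (i) The infimum in the definition of $\phi_t(\alpha)$ is attained, i.e. there exists $(\alpha_1,\alpha_2,\ldots)\in G^\infty$ with $\tau_G(\alpha_1,\alpha_2,\ldots)=\alpha$ and $\phi_t(\alpha)=\|(\phi(\alpha_1),\phi(\alpha_2),\ldots)\|_t$. (ii) There exists a finite set $R\subseteq G$ (containing $e$) that replaces $G$ at $t$. (iii) There exists a set $S\subseteq G$ (containing $e$) with $\phi(S)$ finite that replaces $G$ at $t$.
   Context: A height on an Abelian group $G$ is a map $\phi:G\to[0,\infty)$ with $\phi(e)=0$ and $\phi(\beta)=\phi(\beta^{-1})$ for all $\beta\in G$. For a subset $S\subseteq G$ containing $e$, $S^\infty$ denotes the set of sequences $(\alpha_1,\alpha_2,\ldots)$ with all $\alpha_n\in S$ and $\alpha_n=e$ for all but finitely many $n$. The map $\tau_G:G^\infty\to G$ is $\tau_G(\alpha_1,\alpha_2,\ldots)=\prod_{n\ge1}\alpha_n$. $\mathbb R^\infty$ denotes the set of real sequences with only finitely many nonzero entries; for $\mathbf x=(x_1,x_2,\ldots)\in\mathbb R^\infty$, $\|\mathbf x\|_t=(\sum_n|x_n|^t)^{1/t}$ for $t\in(0,\infty)$ and $\|\mathbf x\|_\infty=\max_n|x_n|$. The $t$-metric version of $\phi$ is $\phi_t(\alpha)=\inf\{\|(\phi(\alpha_1),\phi(\alpha_2),\ldots)\|_t : (\alpha_1,\alpha_2,\ldots)\in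 G^\infty,\ \tau_G(\alpha_1,\alpha_2,\ldots)=\alpha\}$. A set $S\subseteq G$ containing $e$ replaces $G$ at $t$ (for the fixed $\alpha$) if $\phi_t(\alpha)=\inf\{\|(\phi(\alpha_1),\phi(\alpha_2),\ldots)\|_t:(\alpha_1,\alpha_2,\ldots)\in S^\infty,\ \tau_G(\alpha_1,\alpha_2,\ldots)=\alpha\}$. *)

theory Defs
  imports "HOL-Analysis.Analysis"
begin

text \<open>The Abelian group G is written additively as a type of class ab_group_add
  (identity 0, inverse uminus, product = sum). Sequences are indexed by nat.\<close>

definition height :: "('a::ab_group_add \<Rightarrow> real) \<Rightarrow> bool" where
  "height \<phi> \<longleftrightarrow> (\<forall>x. \<phi> x \<ge> 0) \<and> \<phi> 0 = 0 \<and> (\<forall>x. \<phi> (- x) = \<phi> x)"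

definition fin_seqs :: "'a::ab_group_add set \<Rightarrow> (nat \<Rightarrow> 'a) set" where
  "fin_seqs S = {a. (\<forall>n. a n \<in> S) \<and> finite {n. a n \<noteq> 0}}"

definition tau :: "(nat \<Rightarrow> 'a::ab_group_add) \<Rightarrow> 'a" where
  "tau a = (\<Sum>n\<in>{n. a n \<noteq> 0}. a n)"

definition tnorm :: "ereal \<Rightarrow> (nat \<Rightarrow> real) \<Rightarrow> real" where
  "tnorm t x = (if t = \<infinity> then Sup (range (\<lambda>n. \<bar>x n\<bar>))
     else (\<Sum>n\<in>{n. x n \<noteq> 0}. \<bar>x n\<bar> powr real_of_ereal t) powr (1 / real_of_ereal t))"

text \<open>Infimum of t-norms over representations of alpha by elements of S
  (taken in the extended reals, so that the infimum of the empty set is infinity).\<close>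
definition inf_rep :: "('a::ab_group_add \<Rightarrow> real) \<Rightarrow> ereal \<Rightarrow> 'a set \<Rightarrow> 'a \<Rightarrow> ereal" where
  "inf_rep \<phi> t S \<alpha> = Inf {ereal (tnorm t (\<phi> \<circ> a)) | a. a \<in> fin_seqs S \<and> tau a = \<alpha>}"

definition phi_t :: "('a::ab_group_add \<Rightarrow> real) \<Rightarrow> ereal \<Rightarrow> 'a \<Rightarrow> ereal" where
  "phi_t \<phi> t \<alpha> = inf_rep \<phi> t UNIV \<alpha>"

definition replaces :: "('a::ab_group_add \<Rightarrow> real) \<Rightarrow> ereal \<Rightarrow> 'a \<Rightarrow> 'a set \<Rightarrow> bool" where
  "replaces \<phi> t \<alpha> S \<longleftrightarrow> 0 \<in> S \<and> phi_t \<phi> t \<alpha> = inf_rep \<phi> t S \<alpha>"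

end

theory Submission
  imports Defs
begin

(* (i) => (ii): the entries of an optimal representation, together with 0, form a
   finite set R; restricting to R can only raise the infimum, and the optimal
   representation shows it does not.  (ii) => (iii) is trivial.
   (iii) => (i) is the real content: if phi(S) is finite, then below any bound there
   are only finitely many values of t-norms of sequences in S^infinity.  For t = infinity
   every such value lies in |phi(S)|; for finite t its t-th power is a sum of elements
   of the finite set of positive numbers |phi(s)|^t, and bounded sums of elements
   bounded below by a positive constant have boundedly many terms.  A nonempty set
   of reals with finite truncations attains its infimum, so the infimum over S is
   attained, and since S replaces G this representation is optimal for phi_t. *)

lemma finite_sums_card:
  fixes P :: "'b::comm_monoid_add set"
  assumes "finite P"
  shows "finite {sum g F | (g::'i \<Rightarrow> 'b) F. finite F \<and> card F = k \<and> g ` F \<subseteq> P}"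
proof (induction k)
  case 0
  have "{sum g F | (g::'i \<Rightarrow> 'b) F. finite F \<and> card F = 0 \<and> g ` F \<subseteq> P} \<subseteq> {0}" by auto
  then show ?case using finite_subset by blast
next
  case (Suc k)
  let ?A = "{sum g F | (g::'i \<Rightarrow> 'b) F. finite F \<and> card F = k \<and> g ` F \<subseteq> P}"
  have "{sum g F | (g::'i \<Rightarrow> 'b) F. finite F \<and> card F = Suc k \<and> g ` F \<subseteq> P}
        \<subseteq> (\<lambda>(p, s). p + s) ` (P \<times> ?A)"
  proof
    fix y assume "y \<in> {sum g F | (g::'i \<Rightarrow> 'b) F. finite F \<and> card F = Suc k \<and> g ` F \<subseteq> P}"
    then obtain g :: "'i \<Rightarrow> 'b" and F
      where y: "y = sum g F" "finite F" "card F = Suc k" "g ` F \<subseteq> P" by blast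
    then obtain x F' where F: "F = insert x F'" "x \<notin> F'" "card F' = k"
      unfolding card_Suc_eq by blast
    then have "finite F'" using y(2) by simp
    have "y = (\<lambda>(p, s). p + s) (g x, sum g F')" using y F \<open>finite F'\<close> by simp
    moreover have "g x \<in> P" using y F by auto
    moreover have "sum g F' \<in> ?A" using \<open>finite F'\<close> F y by auto
    ultimately show "y \<in> (\<lambda>(p, s). p + s) ` (P \<times> ?A)" by blast
  qed
  moreover have "finite ((\<lambda>(p, s). p + s) ` (P \<times> ?A))" using assms Suc.IH by simp
  ultimately show ?case by (rule finite_subset)
qed

text \<open>If all summands are at least m > 0, a sum bounded by C has at most C/m terms,
  so there are only finitely many such sums.\<close>
lemma finite_sums_bounded:
  fixes P :: "real set"
  assumes "finite P" and lower: "\<And>p. p \<in> P \<Longrightarrow> m \<le> p" and "0 < m"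
  shows "finite {sum g F | (g::'i \<Rightarrow> real) F. finite F \<and> g ` F \<subseteq> P \<and> sum g F \<le> C}"
proof -
  have "{sum g F | (g::'i \<Rightarrow> real) F. finite F \<and> g ` F \<subseteq> P \<and> sum g F \<le> C}
     \<subseteq> (\<Union>k\<le>nat \<lceil>C / m\<rceil>. {sum g F | (g::'i \<Rightarrow> real) F. finite F \<and> card F = k \<and> g ` F \<subseteq> P})"
  proof
    fix y assume "y \<in> {sum g F | (g::'i \<Rightarrow> real) F. finite F \<and> g ` F \<subseteq> P \<and> sum g F \<le> C}"
    then obtain g :: "'i \<Rightarrow> real" and F
      where y: "y = sum g F" "finite F" "g ` F \<subseteq> P" "sum g F \<le> C" by blast
    have "real (card F) * m \<le> sum g F" using sum_bounded_below[of F m g] y lower by auto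
    then have "real (card F) \<le> C / m" using y \<open>0 < m\<close> by (simp add: field_simps)
    then have "card F \<le> nat \<lceil>C / m\<rceil>" by linarith
    then show "y \<in> (\<Union>k\<le>nat \<lceil>C / m\<rceil>. {sum g F | (g::'i \<Rightarrow> real) F. finite F \<and> card F = k \<and> g ` F \<subseteq> P})"
      using y by blast
  qed
  then show ?thesis by (rule finite_subset) (auto intro: finite_sums_card assms)
qed

lemma sup_norm_in_heights:
  assumes "finite (\<phi> ` S)" and "a \<in> fin_seqs S"
  shows "tnorm \<infinity> (\<phi> \<circ> a) \<in> abs ` \<phi> ` S"
proof -
  let ?V = "range (\<lambda>n. \<bar>\<phi> (a n)\<bar>)"
  have V: "?V \<subseteq> abs ` \<phi> ` S" using assms(2) by (auto simp: fin_seqs_def)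
  then have "finite ?V" using assms(1) finite_subset by blast
  then have "Sup ?V \<in> ?V" using cSup_eq_Max Max_in by (metis UNIV_not_empty image_is_empty)
  then show ?thesis using V by (auto simp: tnorm_def)
qed

text \<open>For finite t = p > 0, the p-th power of the norm is a sum of the finitely many
  positive numbers |phi(s)|^p; hence only finitely many norm values lie below any bound.\<close>
lemma finite_p_norms_below:
  assumes "\<phi> 0 = 0" and "finite (\<phi> ` S)" and "0 < p"
  shows "finite {tnorm (ereal p) (\<phi> \<circ> a) | a. a \<in> fin_seqs S \<and> tnorm (ereal p) (\<phi> \<circ> a) \<le> B}"
proof -
  define P where "P = (\<lambda>v. \<bar>v\<bar> powr p) ` (\<phi> ` S - {0})"
  have "finite P" using assms(2) by (simp add: P_def)
  define m where "m = (if P = {} then 1 else Min P)"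
  have pos: "\<And>q. q \<in> P \<Longrightarrow> 0 < q" by (auto simp: P_def)
  have "0 < m" "\<And>q. q \<in> P \<Longrightarrow> m \<le> q"
    using pos \<open>finite P\<close> by (auto simp: m_def)
  then have sums: "finite {sum g F | (g::nat \<Rightarrow> real) F. finite F \<and> g ` F \<subseteq> P \<and> sum g F \<le> B powr p}"
    using finite_sums_bounded[OF \<open>finite P\<close>] by blast
  have "{tnorm (ereal p) (\<phi> \<circ> a) | a. a \<in> fin_seqs S \<and> tnorm (ereal p) (\<phi> \<circ> a) \<le> B}
    \<subseteq> (\<lambda>s. s powr (1 / p)) ` {sum g F | (g::nat \<Rightarrow> real) F. finite F \<and> g ` F \<subseteq> P \<and> sum g F \<le> B powr p}"
  proof
    fix y assume "y \<in> {tnorm (ereal p) (\<phi> \<circ> a) | a. a \<in> fin_seqs S \<and> tnorm (ereal p) (\<phi> \<circ> a) \<le> B}"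
    then obtain a where a: "a \<in> fin_seqs S" "y = tnorm (ereal p) (\<phi> \<circ> a)" "y \<le> B" by blast
    define F where "F = {n. \<phi> (a n) \<noteq> 0}"
    define g where "g = (\<lambda>n. \<bar>\<phi> (a n)\<bar> powr p)"
    have "F \<subseteq> {n. a n \<noteq> 0}" using assms(1) by (auto simp: F_def)
    then have "finite F" using a(1) finite_subset by (auto simp: fin_seqs_def)
    have y: "y = sum g F powr (1 / p)" using a(2) by (simp add: tnorm_def F_def g_def)
    have "g ` F \<subseteq> P" using a(1) by (auto simp: g_def F_def P_def fin_seqs_def)
    have "sum g F = y powr p" using y \<open>0 < p\<close> by (simp add: powr_powr g_def sum_nonneg)
    also have "\<dots> \<le> B powr p" using a(3) y \<open>0 < p\<close> by (simp add: powr_mono2)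
    finally show "y \<in> (\<lambda>s. s powr (1 / p)) ` {sum g F | (g::nat \<Rightarrow> real) F. finite F \<and> g ` F \<subseteq> P \<and> sum g F \<le> B powr p}"
      using y \<open>finite F\<close> \<open>g ` F \<subseteq> P\<close> by blast
  qed
  then show ?thesis using sums finite_subset by blast
qed

lemma finite_norms_below:
  assumes "height \<phi>" and "0 < t" and "finite (\<phi> ` S)"
  shows "finite {tnorm t (\<phi> \<circ> a) | a. a \<in> fin_seqs S \<and> tnorm t (\<phi> \<circ> a) \<le> B}"
proof (cases t)
  case (real p)
  then show ?thesis using assms finite_p_norms_below[of \<phi> S p B] by (simp add: height_def)
next
  case PInf
  have "{tnorm t (\<phi> \<circ> a) | a. a \<in> fin_seqs S \<and> tnorm t (\<phi> \<circ> a) \<le> B} \<subseteq> abs ` \<phi> ` S"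
    using sup_norm_in_heights[OF assms(3)] PInf by auto
  then show ?thesis using assms(3) finite_subset by blast
next
  case MInf
  then show ?thesis using assms(2) by simp
qed

lemma Inf_attained_if_finite_below:
  fixes T :: "real set"
  assumes "B \<in> T" and "finite {x \<in> T. x \<le> B}"
  shows "\<exists>x \<in> T. Inf (ereal ` T) = ereal x"
proof -
  define x0 where "x0 = Min {x \<in> T. x \<le> B}"
  have x0: "x0 \<in> T" "x0 \<le> B" using Min_in[OF assms(2)] assms(1) by (auto simp: x0_def)
  have "x0 \<le> y" if "y \<in> T" for y
    using that x0(2) Min_le[OF assms(2)] by (cases "y \<le> B") (auto simp: x0_def)
  then have "Inf (ereal ` T) = ereal x0"
    using x0(1) by (intro antisym Inf_lower Inf_greatest) auto
  then show ?thesis using x0(1) by blast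
qed

lemma inf_rep_le:
  assumes "a \<in> fin_seqs S" and "tau a = \<alpha>"
  shows "inf_rep \<phi> t S \<alpha> \<le> ereal (tnorm t (\<phi> \<circ> a))"
  unfolding inf_rep_def using assms by (auto intro!: Inf_lower)

lemma inf_rep_antimono:
  assumes "A \<subseteq> B"
  shows "inf_rep \<phi> t B \<alpha> \<le> inf_rep \<phi> t A \<alpha>"
proof -
  have "fin_seqs A \<subseteq> fin_seqs B" using assms by (auto simp: fin_seqs_def)
  then show ?thesis unfolding inf_rep_def by (intro Inf_superset_mono) auto
qed

lemma inf_rep_attained:
  assumes "height \<phi>" and "0 < t" and "finite (\<phi> ` S)"
    and "a0 \<in> fin_seqs S" and "tau a0 = \<alpha>"
  shows "\<exists>a \<in> fin_seqs S. tau a = \<alpha> \<and> inf_rep \<phi> t S \<alpha> = ereal (tnorm t (\<phi> \<circ> a))"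
proof -
  define T where "T = {tnorm t (\<phi> \<circ> a) | a. a \<in> fin_seqs S \<and> tau a = \<alpha>}"
  define B where "B = tnorm t (\<phi> \<circ> a0)"
  have "B \<in> T" using assms(4,5) by (auto simp: T_def B_def)
  have "{x \<in> T. x \<le> B} \<subseteq> {tnorm t (\<phi> \<circ> a) | a. a \<in> fin_seqs S \<and> tnorm t (\<phi> \<circ> a) \<le> B}"
    by (auto simp: T_def)
  then have "finite {x \<in> T. x \<le> B}"
    using finite_norms_below[OF assms(1-3)] finite_subset by blast
  then obtain x where "x \<in> T" "Inf (ereal ` T) = ereal x"
    using Inf_attained_if_finite_below[OF \<open>B \<in> T\<close>] by blast
  moreover have "inf_rep \<phi> t S \<alpha> = Inf (ereal ` T)"
    unfolding inf_rep_def T_def by (rule arg_cong[where f = Inf]) auto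
  ultimately show ?thesis by (auto simp: T_def)
qed

text \<open>Every element has the trivial representation (alpha, 0, 0, ...), so phi_t is finite.\<close>
lemma phi_t_finite: "phi_t \<phi> t \<alpha> < \<infinity>"
proof -
  define a where "a = (\<lambda>n::nat. if n = 0 then \<alpha> else 0)"
  have "{n. a n \<noteq> 0} = (if \<alpha> = 0 then {} else {0})" by (auto simp: a_def)
  then have "a \<in> fin_seqs UNIV" "tau a = \<alpha>" by (auto simp: fin_seqs_def tau_def a_def)
  then have "phi_t \<phi> t \<alpha> \<le> ereal (tnorm t (\<phi> \<circ> a))"
    unfolding phi_t_def by (rule inf_rep_le)
  also have "\<dots> < \<infinity>" by simp
  finally show ?thesis .
qed

lemma optimal_rep_gives_finite_replacement:
  assumes "a \<in> fin_seqs UNIV" and "tau a = \<alpha>" and "phi_t \<phi> t \<alpha> = ereal (tnorm t (\<phi> \<circ> a))"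
  shows "\<exists>R. finite R \<and> replaces \<phi> t \<alpha> R"
proof -
  define R where "R = insert 0 (range a)"
  have "R \<subseteq> insert 0 (a ` {n. a n \<noteq> 0})" by (auto simp: R_def)
  then have "finite R" using assms(1) finite_subset by (auto simp: fin_seqs_def)
  have "a \<in> fin_seqs R" using assms(1) by (auto simp: fin_seqs_def R_def)
  then have "inf_rep \<phi> t R \<alpha> \<le> phi_t \<phi> t \<alpha>" using inf_rep_le assms(2,3) by metis
  moreover have "phi_t \<phi> t \<alpha> \<le> inf_rep \<phi> t R \<alpha>"
    unfolding phi_t_def by (rule inf_rep_antimono) simp
  ultimately show ?thesis using \<open>finite R\<close> by (auto simp: replaces_def R_def)
qed

lemma finite_heights_replacement_gives_optimal_rep:
  assumes "height \<phi>" and "0 < t" and "finite (\<phi> ` S)" and "replaces \<phi> t \<alpha> S"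
  shows "\<exists>a \<in> fin_seqs UNIV. tau a = \<alpha> \<and> phi_t \<phi> t \<alpha> = ereal (tnorm t (\<phi> \<circ> a))"
proof -
  have eq: "phi_t \<phi> t \<alpha> = inf_rep \<phi> t S \<alpha>" using assms(4) by (simp add: replaces_def)
  have "\<exists>a0 \<in> fin_seqs S. tau a0 = \<alpha>"
  proof (rule ccontr)
    assume "\<not> ?thesis"
    then have no_reps: "{ereal (tnorm t (\<phi> \<circ> a)) | a. a \<in> fin_seqs S \<and> tau a = \<alpha>} = {}"
      by blast
    have "inf_rep \<phi> t S \<alpha> = Inf {}" unfolding inf_rep_def no_reps ..
    then have "inf_rep \<phi> t S \<alpha> = \<infinity>" by (simp add: top_ereal_def)
    then show False using phi_t_finite[of \<phi> t \<alpha>] eq by simp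
  qed
  then obtain a where "a \<in> fin_seqs S" "tau a = \<alpha>" "inf_rep \<phi> t S \<alpha> = ereal (tnorm t (\<phi> \<circ> a))"
    using inf_rep_attained[OF assms(1-3)] by blast
  moreover have "fin_seqs S \<subseteq> fin_seqs UNIV" by (auto simp: fin_seqs_def)
  ultimately show ?thesis using eq by auto
qed

theorem theorem2p1:
  fixes \<phi> :: "'a::ab_group_add \<Rightarrow> real" and \<alpha> :: 'a and t :: ereal
  assumes "height \<phi>" and "0 < t"
  shows "((\<exists>a \<in> fin_seqs UNIV. tau a = \<alpha> \<and> phi_t \<phi> t \<alpha> = ereal (tnorm t (\<phi> \<circ> a)))
            \<longleftrightarrow> (\<exists>R. finite R \<and> replaces \<phi> t \<alpha> R))
       \<and> ((\<exists>R. finite R \<and> replaces \<phi> t \<alpha> R)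
            \<longleftrightarrow> (\<exists>S. finite (\<phi> ` S) \<and> replaces \<phi> t \<alpha> S))"
proof -
  have i_ii: "\<exists>R. finite R \<and> replaces \<phi> t \<alpha> R"
    if "\<exists>a \<in> fin_seqs UNIV. tau a = \<alpha> \<and> phi_t \<phi> t \<alpha> = ereal (tnorm t (\<phi> \<circ> a))"
    using that optimal_rep_gives_finite_replacement by blast
  have ii_iii: "\<exists>S. finite (\<phi> ` S) \<and> replaces \<phi> t \<alpha> S"
    if "\<exists>R. finite R \<and> replaces \<phi> t \<alpha> R" using that finite_imageI by metis
  have iii_i: "\<exists>a \<in> fin_seqs UNIV. tau a = \<alpha> \<and> phi_t \<phi> t \<alpha> = ereal (tnorm t (\<phi> \<circ> a))"
    if "\<exists>S. finite (\<phi> ` S) \<and> replaces \<phi> t \<alpha> S"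
    using that finite_heights_replacement_gives_optimal_rep[OF assms] by blast
  show ?thesis using i_ii ii_iii iii_i by blast
qed

end
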